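(* Let $(X,T)$ be a transitive topological dynamical system such that $\operatorname{supp}(X,T)\ne\mathrm{Fix}(X,T^n)$ for every $n\in\mathbb{N}$. Then for every $x\in X$ the Banach proximal cell $BP(x)=\{y\in X:(x,y)\text{ is Banach proximal}\}$ has empty interior.
   Context: A topological dynamical system $(X,T)$ consists of a non-empty compact metric space $(X,d)$ and a continuous map $T:X\to X$. It is transitive if for all non-empty open $U,V\subset X$ the set $\{n\ge0: U\cap T^{-n}V\ne\emptyset\}$ is infinite. $\mathrm{Fix}(X,T^n)=\{x\in X: T^nx=x\}$. A set $F\subset\mathbb{Z}_+$ has Banach density one if for every $\lambda<1$ there is $N\ge1$ with $\#(F\cap I)\ge\lambda\,\#(I)$ for every interval of integers $I\subset\mathbb{Z}_+$ with $\#(I)\ge N$. A pair $(x,y)$ is Banach proximal if for every $\varepsilon>0$ the set $\{n\in\mathbb{Z}_+: d(T^nx,T^ny)<\varepsilon\}$ has Banach density one. $\operatorname{supp}(X,T)$ is the smallest closed set $C\subset X$ with $\mu(C)=1$ for all $T$-invariant Borel probability measures $\mu$. *)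

theory Defs
  imports "HOL-Probability.Probability"
begin

definition tds :: "'a::metric_space set \<Rightarrow> ('a \<Rightarrow> 'a) \<Rightarrow> bool" where
  "tds X T \<longleftrightarrow> X \<noteq> {} \<and> compact X \<and> continuous_on X T \<and> T ` X \<subseteq> X"

definition transitive_sys :: "'a::metric_space set \<Rightarrow> ('a \<Rightarrow> 'a) \<Rightarrow> bool" where
  "transitive_sys X T \<longleftrightarrow>
     (\<forall>U V. openin (top_of_set X) U \<and> U \<noteq> {} \<and> openin (top_of_set X) V \<and> V \<noteq> {} \<longrightarrow>
        infinite {n::nat. U \<inter> {x \<in> X. (T ^^ n) x \<in> V} \<noteq> {}})"

definition Fix :: "'a set \<Rightarrow> ('a \<Rightarrow> 'a) \<Rightarrow> nat \<Rightarrow> 'a set" where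
  "Fix X T n = {x \<in> X. (T ^^ n) x = x}"

definition invariant_measure :: "'a::metric_space set \<Rightarrow> ('a \<Rightarrow> 'a) \<Rightarrow> 'a measure \<Rightarrow> bool" where
  "invariant_measure X T \<mu> \<longleftrightarrow>
     prob_space \<mu> \<and> sets \<mu> = sets (restrict_space borel X) \<and> T \<in> measurable \<mu> \<mu> \<and>
     (\<forall>A \<in> sets \<mu>. emeasure \<mu> (T -` A \<inter> space \<mu>) = emeasure \<mu> A)"

text \<open>The support: the smallest closed set of full measure for every invariant measure,
realised as the intersection of all such closed sets.\<close>
definition supp :: "'a::metric_space set \<Rightarrow> ('a \<Rightarrow> 'a) \<Rightarrow> 'a set" where
  "supp X T = \<Inter> {C. closed C \<and> C \<subseteq> X \<and>
       (\<forall>\<mu>. invariant_measure X T \<mu> \<longrightarrow> emeasure \<mu> C = 1)}"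

definition banach_density_one :: "nat set \<Rightarrow> bool" where
  "banach_density_one F \<longleftrightarrow>
     (\<forall>l::real. l < 1 \<longrightarrow> (\<exists>N\<ge>1. \<forall>a b::nat. a \<le> b \<and> card {a..b} \<ge> N \<longrightarrow>
        real (card (F \<inter> {a..b})) \<ge> l * real (card {a..b})))"

definition banach_proximal :: "('a::metric_space \<Rightarrow> 'a) \<Rightarrow> 'a \<Rightarrow> 'a \<Rightarrow> bool" where
  "banach_proximal T x y \<longleftrightarrow>
     (\<forall>\<epsilon>>0. banach_density_one {n. dist ((T ^^ n) x) ((T ^^ n) y) < \<epsilon>})"

definition BP :: "'a::metric_space set \<Rightarrow> ('a \<Rightarrow> 'a) \<Rightarrow> 'a \<Rightarrow> 'a set" where
  "BP X T x = {y \<in> X. banach_proximal T x y}"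

end

theory Submission
  imports Defs
begin

text \<open>
  Suppose a nonempty open set \<open>U\<close> lies in \<open>BP(x)\<close>. Transitivity yields \<open>k \<ge> 1\<close> and a point
  \<open>w\<close> with dense orbit such that \<open>w\<close> and \<open>T\<^sup>k w\<close> both lie in \<open>U\<close>; hence \<open>(w, T\<^sup>k w)\<close> is
  Banach proximal. Following the orbit of \<open>w\<close>, every \<open>z\<close> inherits this uniformly: the times
  \<open>n\<close> with \<open>d(T\<^sup>n z, T\<^sup>n\<^sup>+\<^sup>k z) < \<epsilon>\<close> have Banach density one with a threshold independent of
  \<open>z\<close>. Averaging visit counts against an invariant measure then shows that
  \<open>{z. d(z, T\<^sup>k z) \<ge> \<epsilon>}\<close> is null, so \<open>Fix(T\<^sup>k)\<close> has full measure and contains the support.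
  Conversely every point of \<open>Fix(T\<^sup>k)\<close> carries its periodic orbit measure, so
  \<open>supp(X,T) = Fix(X,T\<^sup>k)\<close>, contradicting the hypothesis.
\<close>

section \<open>Banach density\<close>

definition banach_density_bound :: "nat set \<Rightarrow> real \<Rightarrow> nat \<Rightarrow> bool" where
  "banach_density_bound F l N \<longleftrightarrow>
     (\<forall>a b. a \<le> b \<and> card {a..b} \<ge> N \<longrightarrow> real (card (F \<inter> {a..b})) \<ge> l * real (card {a..b}))"

lemma banach_density_one_iff_bound:
  "banach_density_one F \<longleftrightarrow> (\<forall>l<1. \<exists>N\<ge>1. banach_density_bound F l N)"
  unfolding banach_density_one_def banach_density_bound_def by blast

lemma banach_density_bound_mono:
  assumes "banach_density_bound F l N" "F \<subseteq> G"
  shows "banach_density_bound G l N"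
  unfolding banach_density_bound_def
proof (intro allI impI)
  fix a b :: nat assume ab: "a \<le> b \<and> card {a..b} \<ge> N"
  have "card (F \<inter> {a..b}) \<le> card (G \<inter> {a..b})"
    using assms(2) by (intro card_mono) auto
  then show "real (card (G \<inter> {a..b})) \<ge> l * real (card {a..b})"
    using assms(1) ab unfolding banach_density_bound_def by force
qed

lemma banach_density_bound_Int:
  assumes "banach_density_bound F l N" "banach_density_bound G l' N"
  shows "banach_density_bound (F \<inter> G) (l + l' - 1) N"
  unfolding banach_density_bound_def
proof (intro allI impI)
  fix a b :: nat assume ab: "a \<le> b \<and> card {a..b} \<ge> N"
  have "card (F \<inter> {a..b}) + card (G \<inter> {a..b})
        = card (F \<inter> {a..b} \<union> G \<inter> {a..b}) + card (F \<inter> G \<inter> {a..b})"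
    by (subst card_Un_Int) (auto simp: Int_ac)
  also have "card (F \<inter> {a..b} \<union> G \<inter> {a..b}) \<le> card {a..b}"
    by (intro card_mono) auto
  finally have "real (card (F \<inter> {a..b})) + real (card (G \<inter> {a..b}))
                \<le> real (card {a..b}) + real (card (F \<inter> G \<inter> {a..b}))"
    by linarith
  then show "real (card (F \<inter> G \<inter> {a..b})) \<ge> (l + l' - 1) * real (card {a..b})"
    using assms ab unfolding banach_density_bound_def by (force simp: algebra_simps)
qed

lemma banach_density_bound_mono_length:
  "banach_density_bound F l N \<Longrightarrow> N \<le> N' \<Longrightarrow> banach_density_bound F l N'"
  unfolding banach_density_bound_def by (meson order_trans)

lemma banach_density_one_mono:
  "banach_density_one F \<Longrightarrow> F \<subseteq> G \<Longrightarrow> banach_density_one G"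
  unfolding banach_density_one_iff_bound by (meson banach_density_bound_mono)

lemma banach_density_one_Int:
  assumes "banach_density_one F" "banach_density_one G"
  shows "banach_density_one (F \<inter> G)"
  unfolding banach_density_one_iff_bound
proof (intro allI impI)
  fix l :: real assume "l < 1"
  then have "(1 + l) / 2 < 1" by simp
  then obtain N1 N2 where "N1 \<ge> 1" "banach_density_bound F ((1 + l) / 2) N1"
    and "banach_density_bound G ((1 + l) / 2) N2"
    using assms unfolding banach_density_one_iff_bound by blast
  then have "banach_density_bound (F \<inter> G) ((1 + l) / 2 + (1 + l) / 2 - 1) (max N1 N2)"
    by (intro banach_density_bound_Int) (auto elim: banach_density_bound_mono_length)
  then show "\<exists>N\<ge>1. banach_density_bound (F \<inter> G) l N"
    using \<open>N1 \<ge> 1\<close> by (intro exI[of _ "max N1 N2"]) auto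
qed

lemma card_shift_Int_atLeastAtMost:
  fixes m a b :: nat
  shows "card ({n. n + m \<in> F} \<inter> {a..b}) = card (F \<inter> {a + m..b + m})"
proof -
  have "F \<inter> {a + m..b + m} = (\<lambda>n. n + m) ` ({n. n + m \<in> F} \<inter> {a..b})"
  proof (intro equalityI subsetI)
    fix x assume "x \<in> F \<inter> {a + m..b + m}"
    then have "x = (x - m) + m" "x - m \<in> {n. n + m \<in> F} \<inter> {a..b}" by auto
    then show "x \<in> (\<lambda>n. n + m) ` ({n. n + m \<in> F} \<inter> {a..b})" by (rule image_eqI)
  qed auto
  then show ?thesis
    by (simp add: card_image inj_on_def)
qed

lemma banach_density_bound_shift:
  assumes "banach_density_bound F l N"
  shows "banach_density_bound {n. n + m \<in> F} l N"
  unfolding banach_density_bound_def card_shift_Int_atLeastAtMost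
proof (intro allI impI)
  fix a b :: nat assume "a \<le> b \<and> card {a..b} \<ge> N"
  moreover have "card {a + m..b + m} = card {a..b}" by simp
  ultimately show "real (card (F \<inter> {a + m..b + m})) \<ge> l * real (card {a..b})"
    using assms unfolding banach_density_bound_def by (metis add_le_cancel_right)
qed

lemma card_lessThan_Diff_le:
  assumes "banach_density_bound F l N" "N \<ge> 1"
  shows "real (card ({..<N} - F)) \<le> (1 - l) * real N"
proof -
  have N: "{..<N} = {0..N - 1}" "card {0..N - 1} = N" using assms(2) by auto
  then have "0 \<le> N - 1 \<and> card {0..N - 1} \<ge> N" by simp
  then have "real (card (F \<inter> {0..N - 1})) \<ge> l * real (card {0..N - 1})"
    using assms(1) unfolding banach_density_bound_def by blast
  then have "real (card ({..<N} \<inter> F)) \<ge> l * real N"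
    using N by (simp add: Int_commute)
  moreover have "card ({..<N} \<inter> F) + card ({..<N} - F) = N"
    using card_Int_Diff[of "{..<N}" F] by simp
  ultimately show ?thesis by (simp add: algebra_simps)
qed

section \<open>Banach proximality and iterates\<close>

definition close_times :: "('a::metric_space \<Rightarrow> 'a) \<Rightarrow> real \<Rightarrow> 'a \<Rightarrow> 'a \<Rightarrow> nat set" where
  "close_times T e x y = {n. dist ((T ^^ n) x) ((T ^^ n) y) < e}"

lemma banach_proximal_iff_close_times:
  "banach_proximal T x y \<longleftrightarrow> (\<forall>e>0. banach_density_one (close_times T e x y))"
  unfolding banach_proximal_def close_times_def ..

lemma banach_proximal_euclidean:
  assumes "banach_proximal T x y" "banach_proximal T x z"
  shows "banach_proximal T y z"
  unfolding banach_proximal_iff_close_times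
proof (intro allI impI)
  fix e :: real assume "e > 0"
  then have "banach_density_one (close_times T (e/2) x y \<inter> close_times T (e/2) x z)"
    using assms by (intro banach_density_one_Int) (auto simp: banach_proximal_iff_close_times)
  then show "banach_density_one (close_times T e y z)"
    by (rule banach_density_one_mono) (auto simp: close_times_def intro: dist_triangle_half_r)
qed

lemma funpow_funpow: "(f ^^ m) ((f ^^ n) x) = (f ^^ (m + n)) x"
  by (simp add: funpow_add)

lemma funpow_image_subset: "T ` X \<subseteq> X \<Longrightarrow> (T ^^ n) ` X \<subseteq> X"
  by (induction n) (auto simp: image_subset_iff)

lemma continuous_on_funpow:
  assumes "continuous_on X T" "T ` X \<subseteq> X"
  shows "continuous_on X (T ^^ n)"
proof (induction n)
  case (Suc n)
  then show ?case
    using funpow_image_subset[OF assms(2)]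
    by (auto intro: continuous_on_compose2[OF assms(1)])
qed (simp add: continuous_on_id)

lemma closed_Fix:
  assumes "tds X T"
  shows "closed (Fix X T k)"
proof -
  have "compact X" "continuous_on X T" "T ` X \<subseteq> X"
    using assms unfolding tds_def by auto
  then have "closed {x \<in> X. dist ((T ^^ k) x) x = 0}"
    by (intro continuous_closed_preimage_constant continuous_on_dist continuous_on_funpow
        continuous_on_id compact_imp_closed)
  then show ?thesis
    unfolding Fix_def by simp
qed

lemma iterates_close_near_point:
  assumes "continuous_on X T" "T ` X \<subseteq> X" "z \<in> X" "finite I" "e > 0"
  obtains d where "d > 0" "\<And>y n. y \<in> X \<Longrightarrow> dist y z < d \<Longrightarrow> n \<in> I \<Longrightarrow> dist ((T ^^ n) y) ((T ^^ n) z) < e"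
proof -
  have "\<forall>\<^sub>F y in at z within X. dist ((T ^^ n) y) ((T ^^ n) z) < e" for n
    using continuous_on_funpow[OF assms(1,2), of n] assms(3,5)
    unfolding continuous_on_def by (blast intro: tendstoD)
  then have "\<forall>\<^sub>F y in at z within X. \<forall>n\<in>I. dist ((T ^^ n) y) ((T ^^ n) z) < e"
    using assms(4) by (simp add: eventually_ball_finite_distrib)
  then obtain d where "d > 0" "\<forall>y\<in>X. y \<noteq> z \<and> dist y z < d \<longrightarrow> (\<forall>n\<in>I. dist ((T ^^ n) y) ((T ^^ n) z) < e)"
    unfolding eventually_at by blast
  then show ?thesis
    using assms(5) by (metis dist_self that)
qed

lemma funpow_mod_period:
  assumes "(f ^^ k) p = p"
  shows "(f ^^ (i mod k)) p = (f ^^ i) p"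
proof -
  have "(f ^^ (k * j)) p = p" for j
    by (induction j) (simp_all add: funpow_add assms)
  then have "(f ^^ (i mod k)) ((f ^^ (k * (i div k))) p) = (f ^^ (i mod k)) p"
    by simp
  then show ?thesis
    by (simp add: funpow_funpow)
qed

section \<open>Transitive points\<close>

definition transitive_point :: "'a::metric_space set \<Rightarrow> ('a \<Rightarrow> 'a) \<Rightarrow> 'a \<Rightarrow> bool" where
  "transitive_point X T w \<longleftrightarrow> w \<in> X \<and> (\<forall>z\<in>X. \<forall>d>0. \<exists>n. dist ((T ^^ n) w) z < d)"

lemma transitive_sys_visits_ball:
  assumes "tds X T" "transitive_sys X T" "c \<in> X" "r > 0"
  defines "S \<equiv> {x \<in> X. \<exists>n. (T ^^ n) x \<in> ball c r}"
  shows "openin (top_of_set X) S" "top_of_set X closure_of S = X"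
proof -
  have cT: "continuous_on X T" and TX: "T ` X \<subseteq> X"
    using assms(1) unfolding tds_def by auto
  have "S = (\<Union>n. X \<inter> (T ^^ n) -` ball c r)"
    unfolding S_def by auto
  moreover have "openin (top_of_set X) (\<Union>n. X \<inter> (T ^^ n) -` ball c r)"
    by (intro openin_Union) (auto intro!: continuous_openin_preimage_gen continuous_on_funpow cT TX)
  ultimately show "openin (top_of_set X) S"
    by (simp only:)
  have "S \<inter> U \<noteq> {}" if U: "openin (top_of_set X) U" "U \<noteq> {}" for U
  proof -
    have "openin (top_of_set X) (X \<inter> ball c r)" "X \<inter> ball c r \<noteq> {}"
      using assms(3,4) by (auto simp: openin_open_Int)
    then have "infinite {n. U \<inter> {x \<in> X. (T ^^ n) x \<in> X \<inter> ball c r} \<noteq> {}}"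
      using assms(2) U unfolding transitive_sys_def by blast
    then obtain n where "U \<inter> {x \<in> X. (T ^^ n) x \<in> X \<inter> ball c r} \<noteq> {}"
      using not_finite_existsD by blast
    then show ?thesis
      unfolding S_def by blast
  qed
  then show "top_of_set X closure_of S = X"
    using dense_intersects_open[of "top_of_set X" S] by auto
qed

lemma transitive_sys_obtain_transitive_point:
  assumes "tds X T" "transitive_sys X T" "openin (top_of_set X) W" "W \<noteq> {}"
  obtains w where "w \<in> W" "transitive_point X T w"
proof -
  have "compact X"
    using assms(1) unfolding tds_def by auto
  then have "\<forall>j. \<exists>F. finite F \<and> F \<subseteq> X \<and> X \<subseteq> (\<Union>c\<in>F. ball c (inverse (Suc j)))"
    using seq_compact_imp_totally_bounded[OF compact_imp_seq_compact[OF \<open>compact X\<close>]] by simp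
  then obtain F where F: "\<And>j. finite (F j)" "\<And>j. F j \<subseteq> X"
    "\<And>j. X \<subseteq> (\<Union>c\<in>F j. ball c (inverse (Suc j)))"
    by metis
  txt \<open>By Baire, some point of \<open>W\<close> visits every ball of radius \<open>1/(j+1)\<close> of these covers.\<close>
  define S where "S c r = {x \<in> X. \<exists>n. (T ^^ n) x \<in> ball c r}" for c r
  define \<G> where "\<G> = (\<lambda>(j, c). S c (inverse (Suc j))) ` (SIGMA j:UNIV. F j)"
  have "countable \<G>"
    unfolding \<G>_def using F(1) by (intro countable_image countable_SIGMA) (auto intro: countable_finite)
  moreover have "openin (top_of_set X) G \<and> top_of_set X closure_of G = topspace (top_of_set X)"
    if "G \<in> \<G>" for G
  proof -
    obtain j c where "c \<in> F j" "G = S c (inverse (Suc j))"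
      using \<open>G \<in> \<G>\<close> unfolding \<G>_def by blast
    then show ?thesis
      using F(2) transitive_sys_visits_ball[OF assms(1,2), of c "inverse (Suc j)"]
      unfolding S_def by auto
  qed
  moreover have "locally_compact_space (top_of_set X) \<and> regular_space (top_of_set X)"
    using \<open>compact X\<close>
    by (auto intro!: compact_imp_locally_compact_space compact_space_subtopology
        metrizable_imp_regular_space metrizable_space_subtopology metrizable_space_euclidean)
  ultimately have "top_of_set X closure_of \<Inter>\<G> = topspace (top_of_set X)"
    by (intro Baire_category) auto
  then obtain w where "w \<in> W" and w: "\<And>G. G \<in> \<G> \<Longrightarrow> w \<in> G"
    using assms(3,4) unfolding dense_intersects_open by blast
  have "\<exists>n. dist ((T ^^ n) w) z < d" if "z \<in> X" "d > 0" for z d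
  proof -
    obtain j where j: "inverse (real (Suc j)) < d / 2"
      using reals_Archimedean[of "d / 2"] \<open>d > 0\<close> by auto
    obtain c where c: "c \<in> F j" "dist c z < inverse (Suc j)"
      using F(3) \<open>z \<in> X\<close> by fastforce
    have "w \<in> S c (inverse (Suc j))"
      using w c(1) unfolding \<G>_def by blast
    then obtain n where "dist c ((T ^^ n) w) < inverse (Suc j)"
      unfolding S_def by auto
    then have "dist ((T ^^ n) w) z < d"
      using c(2) j dist_triangle3[of "(T ^^ n) w" z c] by linarith
    then show ?thesis ..
  qed
  moreover have "w \<in> X"
    using \<open>w \<in> W\<close> openin_imp_subset[OF assms(3)] by blast
  ultimately show ?thesis
    using that[OF \<open>w \<in> W\<close>] unfolding transitive_point_def by blast
qed

lemma transitive_point_shadows_window: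
  assumes "tds X T" "transitive_point X T w" "z \<in> X" "e > 0"
  obtains m where
    "{n. n + m \<in> close_times T (e / 2) w ((T ^^ k) w)} \<inter> {a..b} \<subseteq> close_times T e z ((T ^^ k) z)"
proof -
  have cT: "continuous_on X T" and TX: "T ` X \<subseteq> X"
    using assms(1) unfolding tds_def by auto
  obtain d where "d > 0" and d: "\<And>y n. y \<in> X \<Longrightarrow> dist y z < d \<Longrightarrow> n \<in> {a..b + k} \<Longrightarrow>
      dist ((T ^^ n) y) ((T ^^ n) z) < e / 4"
    using iterates_close_near_point[OF cT TX \<open>z \<in> X\<close>, of "{a..b + k}" "e / 4"] \<open>e > 0\<close> by auto
  obtain m where m: "dist ((T ^^ m) w) z < d"
    using assms(2,3) \<open>d > 0\<close> unfolding transitive_point_def by blast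
  define y where "y = (T ^^ m) w"
  have "y \<in> X"
    unfolding y_def using funpow_image_subset[OF TX] assms(2) unfolding transitive_point_def by blast
  have "n \<in> close_times T e z ((T ^^ k) z)"
    if n: "n + m \<in> close_times T (e / 2) w ((T ^^ k) w)" "n \<in> {a..b}" for n
  proof -
    have "dist ((T ^^ n) y) ((T ^^ n) z) < e / 4" "dist ((T ^^ (n + k)) y) ((T ^^ (n + k)) z) < e / 4"
      using d \<open>y \<in> X\<close> m n(2) unfolding y_def by auto
    moreover have "dist ((T ^^ n) y) ((T ^^ (n + k)) y) < e / 2"
      using n(1) unfolding close_times_def y_def by (simp add: funpow_funpow add_ac)
    moreover have "dist ((T ^^ n) z) ((T ^^ (n + k)) z)
        \<le> dist ((T ^^ n) y) ((T ^^ n) z) + dist ((T ^^ n) y) ((T ^^ (n + k)) y)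
          + dist ((T ^^ (n + k)) y) ((T ^^ (n + k)) z)"
      using dist_triangle[of "(T ^^ n) z" "(T ^^ (n + k)) z" "(T ^^ n) y"]
        dist_triangle[of "(T ^^ n) y" "(T ^^ (n + k)) z" "(T ^^ (n + k)) y"]
      by (simp add: dist_commute)
    ultimately show ?thesis
      unfolding close_times_def by (simp add: funpow_funpow add_ac)
  qed
  then show ?thesis
    using that by blast
qed

text \<open>The density threshold of \<open>(w, T\<^sup>k w)\<close> serves for every \<open>z\<close>, since each window of
  \<open>z\<close> is shadowed by a shifted window of \<open>w\<close>.\<close>

lemma uniform_banach_density_from_transitive_point:
  assumes "tds X T" "transitive_point X T w" "banach_proximal T w ((T ^^ k) w)" "e > 0" "l < 1"
  shows "\<exists>N\<ge>1. \<forall>z\<in>X. banach_density_bound (close_times T e z ((T ^^ k) z)) l N"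
proof -
  define Fw where "Fw = close_times T (e / 2) w ((T ^^ k) w)"
  have "banach_density_one Fw"
    using assms(3,4) unfolding banach_proximal_iff_close_times Fw_def by simp
  then obtain N where "N \<ge> 1" and N: "banach_density_bound Fw l N"
    using \<open>l < 1\<close> unfolding banach_density_one_iff_bound by blast
  have "banach_density_bound (close_times T e z ((T ^^ k) z)) l N" if "z \<in> X" for z
    unfolding banach_density_bound_def
  proof (intro allI impI)
    fix a b :: nat assume ab: "a \<le> b \<and> card {a..b} \<ge> N"
    obtain m where "{n. n + m \<in> Fw} \<inter> {a..b} \<subseteq> close_times T e z ((T ^^ k) z)"
      using transitive_point_shadows_window[OF assms(1,2) \<open>z \<in> X\<close> \<open>e > 0\<close>] unfolding Fw_def by blast
    then have "card ({n. n + m \<in> Fw} \<inter> {a..b}) \<le> card (close_times T e z ((T ^^ k) z) \<inter> {a..b})"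
      by (intro card_mono) auto
    moreover have "real (card ({n. n + m \<in> Fw} \<inter> {a..b})) \<ge> l * real (card {a..b})"
      using banach_density_bound_shift[OF N, of m] ab unfolding banach_density_bound_def by blast
    ultimately show "real (card (close_times T e z ((T ^^ k) z) \<inter> {a..b})) \<ge> l * real (card {a..b})"
      by linarith
  qed
  with \<open>N \<ge> 1\<close> show ?thesis
    by blast
qed

section \<open>Invariant measures and the support\<close>

lemma space_invariant_measure: "invariant_measure X T \<mu> \<Longrightarrow> space \<mu> = X"
proof -
  assume "invariant_measure X T \<mu>"
  then have "space \<mu> = space (restrict_space borel X)"
    unfolding invariant_measure_def by (intro sets_eq_imp_space_eq) simp
  then show ?thesis
    by (simp add: space_restrict_space)
qed

lemma sets_invariant_measureI:
  "invariant_measure X T \<mu> \<Longrightarrow> C \<in> sets borel \<Longrightarrow> C \<subseteq> X \<Longrightarrow> C \<in> sets \<mu>"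
  unfolding invariant_measure_def by (auto simp: sets_restrict_space)

lemma emeasure_funpow_vimage:
  assumes "invariant_measure X T \<mu>" "A \<in> sets \<mu>"
  shows "emeasure \<mu> ((T ^^ n) -` A \<inter> X) = emeasure \<mu> A"
proof (induction n)
  case 0
  show ?case
    using sets.sets_into_space[OF assms(2)] space_invariant_measure[OF assms(1)]
    by (simp add: Int_absorb2)
next
  case (Suc n)
  have T: "T \<in> measurable \<mu> \<mu>" and space: "space \<mu> = X"
    using assms(1) space_invariant_measure unfolding invariant_measure_def by auto
  have "(T ^^ Suc n) -` A \<inter> X = T -` ((T ^^ n) -` A \<inter> X) \<inter> X"
    using measurable_space[OF T] space by (auto simp: funpow_Suc_right funpow_swap1)
  then have "emeasure \<mu> ((T ^^ Suc n) -` A \<inter> X) = emeasure \<mu> (T -` ((T ^^ n) -` A \<inter> X) \<inter> X)"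
    by (simp only:)
  also have "\<dots> = emeasure \<mu> ((T ^^ n) -` A \<inter> X)"
  proof -
    have "\<forall>S\<in>sets \<mu>. emeasure \<mu> (T -` S \<inter> space \<mu>) = emeasure \<mu> S"
      using assms(1) unfolding invariant_measure_def by blast
    moreover have "(T ^^ n) -` A \<inter> X \<in> sets \<mu>"
      using measurable_sets[OF measurable_compose_n[OF T] assms(2)] space by simp
    ultimately show ?thesis
      unfolding space by blast
  qed
  also have "\<dots> = emeasure \<mu> A"
    by (rule Suc.IH)
  finally show ?case .
qed

lemma measure_le_visit_frequency:
  assumes "invariant_measure X T \<mu>" "A \<in> sets \<mu>" "N > 0"
    and visits: "\<And>z. z \<in> X \<Longrightarrow> real (card {n \<in> {..<N}. (T ^^ n) z \<in> A}) \<le> c * real N"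
  shows "measure \<mu> A \<le> c"
proof -
  interpret prob_space \<mu>
    using assms(1) unfolding invariant_measure_def by simp
  have space: "space \<mu> = X" and T: "T \<in> measurable \<mu> \<mu>"
    using assms(1) space_invariant_measure unfolding invariant_measure_def by auto
  define B where "B n = (T ^^ n) -` A \<inter> X" for n
  have B: "B n \<in> sets \<mu>" for n
    using measurable_sets[OF measurable_compose_n[OF T] assms(2)] space unfolding B_def by simp
  have "real N * measure \<mu> A = (\<Sum>n<N. measure \<mu> (B n))"
    using emeasure_funpow_vimage[OF assms(1,2)] unfolding B_def measure_def by simp
  also have "\<dots> = (\<Sum>n<N. integral\<^sup>L \<mu> (indicator (B n)))"
    using B by simp
  also have "\<dots> = integral\<^sup>L \<mu> (\<lambda>z. \<Sum>n<N. indicator (B n) z)"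
    using B by (intro Bochner_Integration.integral_sum[symmetric]) (simp add: integrable_indicator_iff emeasure_eq_measure)
  also have "\<dots> \<le> integral\<^sup>L \<mu> (\<lambda>z. c * real N)"
  proof (intro integral_mono)
    fix z assume "z \<in> space \<mu>"
    then have "(\<Sum>n<N. indicator (B n) z) = real (card {n \<in> {..<N}. (T ^^ n) z \<in> A})"
      unfolding B_def space by (simp add: indicator_def sum.If_cases Int_def)
    then show "(\<Sum>n<N. indicator (B n) z) \<le> c * real N"
      using visits \<open>z \<in> space \<mu>\<close> space by simp
  qed (use B in \<open>auto simp: integrable_indicator_iff emeasure_eq_measure\<close>)
  finally show ?thesis
    using assms(3) by (simp add: prob_space)
qed

lemma measure_displaced_points_eq_0:
  assumes "tds X T" "invariant_measure X T \<mu>" "e > 0"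
    and unif: "\<And>l. l < 1 \<Longrightarrow> \<exists>N\<ge>1. \<forall>z\<in>X. banach_density_bound (close_times T e z ((T ^^ k) z)) l N"
  defines "A \<equiv> {z \<in> X. e \<le> dist z ((T ^^ k) z)}"
  shows "A \<in> sets \<mu>" "measure \<mu> A = 0"
proof -
  have "compact X" "continuous_on X T" "T ` X \<subseteq> X"
    using assms(1) unfolding tds_def by auto
  then have "continuous_on X (\<lambda>z. dist z ((T ^^ k) z))"
    by (intro continuous_on_dist continuous_on_id continuous_on_funpow) auto
  then have "closed (X \<inter> (\<lambda>z. dist z ((T ^^ k) z)) -` {e..})"
    using compact_imp_closed[OF \<open>compact X\<close>] by (rule continuous_closed_preimage) simp
  moreover have "A = X \<inter> (\<lambda>z. dist z ((T ^^ k) z)) -` {e..}"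
    unfolding A_def by auto
  ultimately have "closed A"
    by simp
  then show A: "A \<in> sets \<mu>"
    by (rule sets_invariant_measureI[OF assms(2) borel_closed]) (simp add: A_def)
  have "measure \<mu> A \<le> 1 - l" if "l < 1" for l
  proof -
    obtain N where "N \<ge> 1" and N: "\<And>z. z \<in> X \<Longrightarrow> banach_density_bound (close_times T e z ((T ^^ k) z)) l N"
      using unif \<open>l < 1\<close> by blast
    have "real (card {n \<in> {..<N}. (T ^^ n) z \<in> A}) \<le> (1 - l) * real N" if "z \<in> X" for z
    proof -
      have "{n \<in> {..<N}. (T ^^ n) z \<in> A} \<subseteq> {..<N} - close_times T e z ((T ^^ k) z)"
        unfolding A_def close_times_def by (auto simp: funpow_funpow add.commute)
      then have "card {n \<in> {..<N}. (T ^^ n) z \<in> A} \<le> card ({..<N} - close_times T e z ((T ^^ k) z))"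
        by (intro card_mono) auto
      then show ?thesis
        using card_lessThan_Diff_le[OF N[OF \<open>z \<in> X\<close>] \<open>N \<ge> 1\<close>] by linarith
    qed
    moreover have "N > 0"
      using \<open>N \<ge> 1\<close> by simp
    ultimately show ?thesis
      using measure_le_visit_frequency[OF assms(2) A] by blast
  qed
  from this[of "1 - measure \<mu> A / 2"] show "measure \<mu> A = 0"
    using measure_nonneg[of \<mu> A] by linarith
qed

lemma emeasure_Fix_eq_1:
  assumes "tds X T" "invariant_measure X T \<mu>"
    and unif: "\<And>e l. e > 0 \<Longrightarrow> l < 1 \<Longrightarrow>
      \<exists>N\<ge>1. \<forall>z\<in>X. banach_density_bound (close_times T e z ((T ^^ k) z)) l N"
  shows "emeasure \<mu> (Fix X T k) = 1"
proof -
  interpret prob_space \<mu>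
    using assms(2) unfolding invariant_measure_def by simp
  define A where "A j = {z \<in> X. inverse (Suc j) \<le> dist z ((T ^^ k) z)}" for j :: nat
  have A: "A j \<in> sets \<mu>" "measure \<mu> (A j) = 0" for j
    using measure_displaced_points_eq_0[OF assms(1,2), of "inverse (Suc j)"] unif
    unfolding A_def by auto
  have "X - Fix X T k = (\<Union>j. A j)"
  proof (intro equalityI subsetI)
    fix z assume z: "z \<in> X - Fix X T k"
    then have "dist z ((T ^^ k) z) > 0"
      unfolding Fix_def by auto
    then obtain j where "inverse (Suc j) < dist z ((T ^^ k) z)"
      using reals_Archimedean by blast
    then show "z \<in> (\<Union>j. A j)"
      using z unfolding A_def by (auto intro: less_imp_le)
  qed (auto simp: A_def Fix_def)
  moreover have "emeasure \<mu> (\<Union>j. A j) = 0"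
    using A by (intro emeasure_UN_eq_0) (auto simp: emeasure_eq_measure)
  moreover have "(\<Union>j. A j) \<in> sets \<mu>"
    using A by blast
  ultimately have "emeasure \<mu> (space \<mu> - (X - Fix X T k)) = 1"
    by (simp add: emeasure_compl emeasure_space_1)
  moreover have "space \<mu> - (X - Fix X T k) = Fix X T k"
    using space_invariant_measure[OF assms(2)] by (auto simp: Fix_def)
  ultimately show ?thesis
    by simp
qed

lemma bij_betw_Suc_mod:
  assumes "k > 0"
  shows "bij_betw (\<lambda>i. Suc i mod k) {..<k} {..<k}"
proof -
  have "inj_on (\<lambda>i. Suc i mod k) {..<k}"
    by (auto simp: inj_on_def mod_Suc split: if_splits)
  moreover have "(\<lambda>i. Suc i mod k) ` {..<k} \<subseteq> {..<k}"
    using assms by auto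
  ultimately show ?thesis
    unfolding bij_betw_def using endo_inj_surj by blast
qed

lemma invariant_measure_periodic_orbit:
  assumes "tds X T" "p \<in> X" "(T ^^ k) p = p" "k \<ge> 1"
  shows "invariant_measure X T
    (distr (measure_pmf (pmf_of_set {..<k})) (restrict_space borel X) (\<lambda>i. (T ^^ i) p))"
proof -
  have cT: "continuous_on X T" and TX: "T ` X \<subseteq> X"
    using assms(1) unfolding tds_def by auto
  define q where "q = pmf_of_set {..<k}"
  define g where "g i = (T ^^ i) p" for i
  define \<mu> where "\<mu> = distr (measure_pmf q) (restrict_space borel X) g"
  have g: "g \<in> measurable (measure_pmf q) (restrict_space borel X)"
    using funpow_image_subset[OF TX] assms(2) unfolding g_def by (auto simp: space_restrict_space)
  have T: "T \<in> measurable (restrict_space borel X) (restrict_space borel X)"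
    using TX borel_measurable_continuous_on_restrict[OF cT]
    by (intro measurable_restrict_space2) (auto simp: space_restrict_space)
  have shift: "map_pmf (\<lambda>i. Suc i mod k) q = q"
    using bij_betw_Suc_mod[of k] assms(4) unfolding q_def bij_betw_def
    by (subst map_pmf_of_set_inj) (auto simp: lessThan_empty_iff)
  have "emeasure \<mu> (T -` A \<inter> X) = emeasure \<mu> A" if A: "A \<in> sets (restrict_space borel X)" for A
  proof -
    have "T -` A \<inter> X \<in> sets (restrict_space borel X)"
      using measurable_sets[OF T A] by (simp add: space_restrict_space)
    then have "emeasure \<mu> (T -` A \<inter> X) = emeasure q (g -` (T -` A \<inter> X))"
      unfolding \<mu>_def by (simp add: emeasure_distr[OF g])
    also have "g -` (T -` A \<inter> X) = (\<lambda>i. Suc i mod k) -` (g -` A)"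
      using funpow_image_subset[OF TX] assms(2) funpow_mod_period[OF assms(3)]
      unfolding g_def by auto
    also have "emeasure q \<dots> = emeasure (map_pmf (\<lambda>i. Suc i mod k) q) (g -` A)"
      by simp
    also have "\<dots> = emeasure \<mu> A"
      unfolding shift \<mu>_def using A by (simp add: emeasure_distr[OF g])
    finally show ?thesis .
  qed
  then have "invariant_measure X T \<mu>"
    unfolding invariant_measure_def \<mu>_def
    using prob_space.prob_space_distr[OF prob_space_measure_pmf g] T
    by (simp add: space_restrict_space)
  then show ?thesis
    unfolding \<mu>_def q_def g_def .
qed

lemma periodic_point_in_supp:
  assumes "tds X T" "p \<in> X" "(T ^^ k) p = p" "k \<ge> 1"
  shows "p \<in> supp X T"
  unfolding supp_def
proof (intro InterI, clarify)
  fix C assume C: "closed C" "C \<subseteq> X" and full: "\<forall>\<mu>. invariant_measure X T \<mu> \<longrightarrow> emeasure \<mu> C = 1"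
  define q where "q = pmf_of_set {..<k}"
  define g where "g i = (T ^^ i) p" for i
  have "T ` X \<subseteq> X"
    using assms(1) unfolding tds_def by auto
  then have g: "g \<in> measurable (measure_pmf q) (restrict_space borel X)"
    using funpow_image_subset[OF \<open>T ` X \<subseteq> X\<close>] assms(2) unfolding g_def
    by (auto simp: space_restrict_space)
  have "C \<in> sets (restrict_space borel X)"
    using C by (auto simp: sets_restrict_space intro!: image_eqI[where x = C])
  moreover have "emeasure (distr (measure_pmf q) (restrict_space borel X) g) C = 1"
    using full invariant_measure_periodic_orbit[OF assms] unfolding q_def g_def by blast
  ultimately have "emeasure q (g -` C) = 1"
    by (simp add: emeasure_distr[OF g])
  then have "measure q (g -` C) = 1"
    by (simp add: measure_pmf.emeasure_eq_measure)
  then have "AE i in q. g i \<in> C"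
    by (auto dest: measure_pmf.AE_prob_1)
  moreover have "0 \<in> set_pmf q"
    using assms(4) unfolding q_def by (simp add: lessThan_empty_iff)
  ultimately show "p \<in> C"
    unfolding g_def by (metis AE_measure_pmf_iff funpow_0)
qed

lemma supp_eq_Fix_if_transitive_point_banach_proximal:
  assumes "tds X T" "transitive_point X T w" "banach_proximal T w ((T ^^ k) w)" "k \<ge> 1"
  shows "supp X T = Fix X T k"
proof
  have "emeasure \<mu> (Fix X T k) = 1" if "invariant_measure X T \<mu>" for \<mu>
    using that uniform_banach_density_from_transitive_point[OF assms(1-3)]
    by (intro emeasure_Fix_eq_1[OF assms(1)])
  then show "supp X T \<subseteq> Fix X T k"
    unfolding supp_def using closed_Fix[OF assms(1)] by (intro Inter_lower) (auto simp: Fix_def)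
  show "Fix X T k \<subseteq> supp X T"
    using periodic_point_in_supp[OF assms(1) _ _ assms(4)] by (auto simp: Fix_def)
qed

lemma transitive_sys_obtain_returning_transitive_point:
  assumes "tds X T" "transitive_sys X T" "openin (top_of_set X) U" "U \<noteq> {}"
  obtains k w where "k \<ge> 1" "transitive_point X T w" "w \<in> U" "(T ^^ k) w \<in> U"
proof -
  have "infinite {n. U \<inter> {y \<in> X. (T ^^ n) y \<in> U} \<noteq> {}}"
    using assms(2-4) unfolding transitive_sys_def by blast
  then obtain k where "k > 0" and k: "U \<inter> {y \<in> X. (T ^^ k) y \<in> U} \<noteq> {}"
    unfolding infinite_nat_iff_unbounded by blast
  have "continuous_on X T" "T ` X \<subseteq> X"
    using assms(1) unfolding tds_def by auto
  then have "continuous_on X (T ^^ k)" "(T ^^ k) ` X \<subseteq> X"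
    by (simp_all add: continuous_on_funpow funpow_image_subset)
  then have "openin (top_of_set X) (X \<inter> (T ^^ k) -` U)"
    using assms(3) by (intro continuous_openin_preimage[where T = X]) auto
  then have "openin (top_of_set X) (U \<inter> (X \<inter> (T ^^ k) -` U))"
    using assms(3) by (blast intro: openin_Int)
  moreover have "U \<inter> (X \<inter> (T ^^ k) -` U) \<noteq> {}"
    using k by blast
  ultimately obtain w where "w \<in> U \<inter> (X \<inter> (T ^^ k) -` U)" "transitive_point X T w"
    using transitive_sys_obtain_transitive_point[OF assms(1,2)] by blast
  with \<open>k > 0\<close> show ?thesis
    using that[of k w] by simp
qed

theorem mainTheorem13:
  fixes X :: "'a::metric_space set" and T :: "'a \<Rightarrow> 'a"
  assumes "tds X T"
    and "transitive_sys X T"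
    and "\<forall>n::nat. n \<ge> 1 \<longrightarrow> supp X T \<noteq> Fix X T n"
  shows "\<forall>x \<in> X. \<forall>U. openin (top_of_set X) U \<and> U \<subseteq> BP X T x \<longrightarrow> U = {}"
proof (intro ballI allI impI)
  fix x U assume U: "openin (top_of_set X) U \<and> U \<subseteq> BP X T x"
  show "U = {}"
  proof (rule ccontr)
    assume "U \<noteq> {}"
    then obtain k w where "k \<ge> 1" "transitive_point X T w" and w: "w \<in> U" "(T ^^ k) w \<in> U"
      using transitive_sys_obtain_returning_transitive_point[OF assms(1,2)] U by blast
    moreover have "banach_proximal T w ((T ^^ k) w)"
      using w U unfolding BP_def by (blast intro: banach_proximal_euclidean)
    ultimately have "supp X T = Fix X T k"
      using supp_eq_Fix_if_transitive_point_banach_proximal[OF assms(1)] by blast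
    with assms(3) \<open>k \<ge> 1\<close> show False
      by blast
  qed
qed

end
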